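(* Let $n$ be a positive integer, $p\ge5$ a prime number, $I$ an infinite set, and $R=\prod_{i\in I}\mathbb Z/np^2\mathbb Z$. There exists a $2\times3$ matrix with entries in $R$ that is partition regular over $R$ but does not satisfy the generalised columns condition.
   Context: A $k\times l$ matrix $\mathbf A$ over $R$ is partition regular over $R$ if for every $r\ge1$ and every map $\chi\colon R\to\{1,\dots,r\}$ there is a nonzero $\mathbf x\in R^l$ with $\mathbf A\mathbf x=0$ and all entries of $\mathbf x$ of the same colour. With columns $\mathbf c_1,\dots,\mathbf c_l$, $\mathbf A$ satisfies the generalised columns condition if there exist $m\ge0$, a partition $\{1,\dots,l\}=I_0\cup\dots\cup I_m$ and $d_0,\dots,d_m\in R\setminus\{0\}$ with (i) $d_0\sum_{i\in I_0}\mathbf c_i=0$; (ii) for $1\le t\le m$, $d_t\sum_{i\in I_t}\mathbf c_i$ lies in the $R$-submodule generated by the $\mathbf c_j$ with $j\in I_0\cup\dots\cup I_{t-1}$; (iii) if $m>0$, the ideal $d_0(d_1\cdots d_m)^nR$ is infinite for every $n\ge0$. *)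

theory Defs
  imports Main "HOL-Library.Function_Algebras" "HOL-Number_Theory.Cong"
begin

text \<open>A k x l matrix over a commutative ring 'a is represented as a function
  A :: nat => nat => 'a, where only the entries A i j with i < k and j < l matter.  Vectors x in R^l are functions
  nat => 'a of which only the entries x j with j < l matter.\<close>

definition partition_regular :: "nat \<Rightarrow> nat \<Rightarrow> (nat \<Rightarrow> nat \<Rightarrow> 'a::comm_ring_1) \<Rightarrow> bool" where
  "partition_regular k l A \<longleftrightarrow>
     (\<forall>r::nat. r \<ge> 1 \<longrightarrow> (\<forall>\<chi>::'a \<Rightarrow> nat. (\<forall>a. \<chi> a \<in> {1..r}) \<longrightarrow>
        (\<exists>x::nat \<Rightarrow> 'a. (\<exists>j<l. x j \<noteq> 0) \<and>
            (\<forall>i<k. (\<Sum>j<l. A i j * x j) = 0) \<and>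
            (\<exists>c. \<forall>j<l. \<chi> (x j) = c))))"

text \<open>The partition {0..<l} = I_0 \<union> ... \<union> I_m into
  (nonempty, pairwise disjoint) parts is given by a surjection f from {0..<l} onto {0..m},
  with I_t = {j. j < l \<and> f j = t}.\<close>

definition gen_columns_condition :: "nat \<Rightarrow> nat \<Rightarrow> (nat \<Rightarrow> nat \<Rightarrow> 'a::comm_ring_1) \<Rightarrow> bool" where
  "gen_columns_condition k l A \<longleftrightarrow>
     (\<exists>(m::nat) (f::nat \<Rightarrow> nat) (d::nat \<Rightarrow> 'a).
        f ` {..<l} = {..m} \<and>
        (\<forall>t\<le>m. d t \<noteq> 0) \<and>
        (\<forall>i<k. d 0 * (\<Sum>j\<in>{j. j < l \<and> f j = 0}. A i j) = 0) \<and>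
        (\<forall>t\<in>{1..m}. \<exists>y::nat \<Rightarrow> 'a.
            \<forall>i<k. d t * (\<Sum>j\<in>{j. j < l \<and> f j = t}. A i j)
                   = (\<Sum>j\<in>{j. j < l \<and> f j < t}. y j * A i j)) \<and>
        (m > 0 \<longrightarrow> (\<forall>e::nat. infinite (range (\<lambda>r::'a. d 0 * (\<Prod>t\<in>{1..m}. d t) ^ e * r)))))"

end

(* The matrix is [[1, -1, -g], [0, 0, p]], where g is a primitive root modulo p, so that p divides
   g^m + 1 for m = (p - 1) / 2 while g, g - 1 and g + 1 are prime to p.

   Partition regularity: u = n p is a nonzero element of Z/np^2 killed by p and by g^m + 1, so
   w_j = g^j u satisfies w_(j+1) = g w_j and w_(j+m) = -w_j. Writing w_0, w_1, ... in increasing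
   order at the coordinates indexed by the 2m-sets {0..m} union (2m, 3m), {0} union (m, 3m) and [1, 2m] of
   a copy of N inside I gives vectors x, y, z with x - y = g z and p z = 0. Ramsey's theorem for
   2m-sets, applied to the colouring that this construction induces on finite subsets of N,
   yields a copy of N on which the three vectors get the same colour.

   The generalised columns condition fails: if the third column lay in I_0, then d_0 would be
   killed by p and by one of g, g - 1, g + 1; otherwise I_0 = {1, 2} and I_1 = {3}, and d_1 p lies
   in the span of the first two columns, whose second entries vanish. In R the annihilator of p
   squares to zero, hence d_0 d_1^2 R = 0. *)

theory Submission
  imports Defs "HOL-Number_Theory.Residue_Primitive_Roots" "HOL-Library.Ramsey"
begin

lemma prime_exists_root_of_minus_one:
  fixes p :: nat
  assumes p: "prime p" "p \<ge> 5"
  obtains g :: int and m :: nat where "m \<ge> 1" "int p dvd g ^ m + 1"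
    "coprime g (int p)" "coprime (g - 1) (int p)" "coprime (g + 1) (int p)"
proof -
  obtain g :: nat where "residue_primroot p g"
    using prime_primitive_root_exists[of p] p prime_gt_1_nat by blast
  hence cop: "coprime p g" and ord: "ord p g = p - 1"
    using p(1) by (auto simp: residue_primroot_def totient_prime)
  have root_of_one: "int p dvd int g ^ k - 1 \<longleftrightarrow> p - 1 dvd k" for k
    using ord_divides[of g k p] ord
    by (metis cong_iff_dvd_diff cong_int_iff of_nat_1 of_nat_power)
  define m where "m = (p - 1) div 2"
  have m: "p - 1 = 2 * m" "m \<ge> 1"
    using p prime_odd_nat[of p] by (auto simp: m_def)
  have "int p dvd (int g ^ m - 1) * (int g ^ m + 1)"
  proof -
    have "int g ^ (2 * m) - 1 = (int g ^ m - 1) * (int g ^ m + 1)"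
      by (simp add: power_mult power2_eq_square algebra_simps)
    thus ?thesis
      using root_of_one[of "2 * m"] m by simp
  qed
  moreover have "\<not> int p dvd int g ^ m - 1"
    using root_of_one[of m] m by (auto dest: dvd_imp_le)
  ultimately have "int p dvd int g ^ m + 1"
    using p(1) by (simp add: prime_dvd_mult_iff)
  moreover have "coprime c (int p)" if "\<not> int p dvd c" for c
    using prime_imp_coprime[of "int p" c] p(1) that by (simp add: coprime_commute)
  moreover have "\<not> int p dvd int g"
    using coprime_common_divisor[OF cop dvd_refl] p(1) by (auto simp: not_prime_unit)
  moreover have "\<not> int p dvd int g - 1"
    using root_of_one[of 1] p(2) by simp
  moreover have "\<not> int p dvd int g + 1"
  proof
    assume "int p dvd int g + 1"
    hence "int p dvd int g ^ 2 - 1"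
      by (simp add: power2_eq_square square_diff_one_factored)
    thus False
      using root_of_one[of 2] p(2) by (auto dest: dvd_imp_le)
  qed
  ultimately show thesis
    using that m(2) by blast
qed

lemma of_int_fun_apply [simp]: "(of_int k :: 'a \<Rightarrow> 'b::ring_1) x = of_int k"
  by (cases k rule: int_cases) (simp_all add: fun_Compl_def)

definition example_matrix :: "int \<Rightarrow> int \<Rightarrow> nat \<Rightarrow> nat \<Rightarrow> 'a::comm_ring_1" where
  "example_matrix c q i j = of_int (if i = 0 then [1, -1, c] ! j else [0, 0, q] ! j)"

lemma example_matrix_simps [simp]:
  "example_matrix c q 0 0 = 1" "example_matrix c q 0 1 = -1" "example_matrix c q 0 2 = of_int c"
  "example_matrix c q 1 0 = 0" "example_matrix c q 1 1 = 0" "example_matrix c q 1 2 = of_int q"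
  by (simp_all add: example_matrix_def)

lemma sum_lessThan_3:
  fixes F :: "nat \<Rightarrow> 'a::comm_monoid_add"
  shows "(\<Sum>j<3. F j) = F 0 + F 1 + F 2"
  by (simp add: eval_nat_numeral add.assoc)

lemma sum_lessThan_3_filter:
  fixes F :: "nat \<Rightarrow> 'a::comm_monoid_add"
  shows "(\<Sum>j\<in>{j. j < 3 \<and> P j}. F j) =
     (if P 0 then F 0 else 0) + (if P 1 then F 1 else 0) + (if P 2 then F 2 else 0)"
proof -
  have "(\<Sum>j\<in>{j. j < 3 \<and> P j}. F j) = (\<Sum>j<3. if P j then F j else 0)"
    by (simp add: sum.inter_filter[symmetric] Collect_conj_eq lessThan_def Int_commute)
  then show ?thesis
    by (simp add: sum_lessThan_3)
qed

lemma annihilator_coprime_eq_0: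
  fixes d :: "'a::comm_ring_1"
  assumes "d * of_int u = 0" "d * of_int q = 0" "coprime u q"
  shows "d = 0"
proof -
  obtain a b where "a * u + b * q = 1"
    using bezout_int[of u q] assms(3) by (auto simp: coprime_iff_gcd_eq_1)
  then have "d = d * of_int (a * u + b * q)"
    by simp
  also have "\<dots> = of_int a * (d * of_int u) + of_int b * (d * of_int q)"
    by (simp add: algebra_simps)
  finally show ?thesis
    using assms by simp
qed

lemma example_matrix_annihilated_column_sum:
  fixes g q :: int and d :: "'a::comm_ring_1"
  assumes coprime: "coprime g q" "coprime (g - 1) q" "coprime (g + 1) q"
    and "d \<noteq> 0" and "\<exists>j<3. P j"
    and annihilated: "\<forall>i<2. d * (\<Sum>j\<in>{j. j < 3 \<and> P j}. example_matrix (- g) q i j) = 0"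
  shows "P 0" "P 1" "\<not> P 2"
proof -
  have row0: "d * ((if P 0 then 1 else 0) + (if P 1 then -1 else 0)
      + (if P 2 then of_int (- g) else 0)) = 0"
    using annihilated[rule_format, of 0] by (simp only: sum_lessThan_3_filter example_matrix_simps)
  have row1: "d * (if P 2 then of_int q else 0) = 0"
    using annihilated[rule_format, of 1]
    by (simp only: sum_lessThan_3_filter example_matrix_simps if_cancel add_0_left)
  show "\<not> P 2"
  proof
    assume "P 2"
    then have "d * of_int q = 0"
      using row1 by simp
    moreover have "d * of_int (- g) = 0 \<or> d * of_int (- (g - 1)) = 0 \<or> d * of_int (- (g + 1)) = 0"
      using row0 \<open>P 2\<close> by (cases "P 0"; cases "P 1") (simp_all add: algebra_simps)
    moreover have "d * of_int (- u) = 0 \<longleftrightarrow> d * of_int u = 0" for u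
      by simp
    ultimately show False
      using annihilator_coprime_eq_0 coprime \<open>d \<noteq> 0\<close> by blast
  qed
  moreover have "P 0 \<or> P 1 \<or> P 2"
    using \<open>\<exists>j<3. P j\<close> by (auto simp: eval_nat_numeral less_Suc_eq)
  moreover have "P 0 \<longleftrightarrow> P 1"
    using row0 \<open>d \<noteq> 0\<close> \<open>\<not> P 2\<close> by (cases "P 0"; cases "P 1") simp_all
  ultimately show "P 0" "P 1"
    by auto
qed

lemma not_gen_columns_condition_example_matrix:
  fixes g q :: int
  assumes coprime: "coprime g q" "coprime (g - 1) q" "coprime (g + 1) q"
    and square_zero: "\<And>d::'a. d * of_int q = 0 \<Longrightarrow> d * d = 0"
  shows "\<not> gen_columns_condition 2 3 (example_matrix (- g) q :: nat \<Rightarrow> nat \<Rightarrow> 'a::comm_ring_1)"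
proof
  let ?A = "example_matrix (- g) q :: nat \<Rightarrow> nat \<Rightarrow> 'a"
  assume "gen_columns_condition 2 3 ?A"
  then obtain M f and d :: "nat \<Rightarrow> 'a" where
    img: "f ` {..<3} = {..M}" and nonzero: "\<forall>t\<le>M. d t \<noteq> 0"
    and first: "\<forall>i<2. d 0 * (\<Sum>j\<in>{j. j < 3 \<and> f j = 0}. ?A i j) = 0"
    and later: "\<forall>t\<in>{1..M}. \<exists>y. \<forall>i<2. d t * (\<Sum>j\<in>{j. j < 3 \<and> f j = t}. ?A i j)
                   = (\<Sum>j\<in>{j. j < 3 \<and> f j < t}. y j * ?A i j)"
    and infinite: "M > 0 \<longrightarrow> (\<forall>e. infinite (range (\<lambda>r. d 0 * (\<Prod>t\<in>{1..M}. d t) ^ e * r)))"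
    unfolding gen_columns_condition_def by (elim exE conjE) (rule that; assumption)
  have "\<exists>j<3. f j = 0"
    using img by (metis atMost_iff imageE lessThan_iff zero_le)
  with example_matrix_annihilated_column_sum[OF coprime, of "d 0" "\<lambda>j. f j = 0"] nonzero first
  have f01: "f 0 = 0" "f 1 = 0" and "f 2 \<noteq> 0"
    by auto
  then have "{0, f 2} = {..M}"
    using img by (auto simp: eval_nat_numeral lessThan_Suc)
  then have "M \<in> {0, f 2}" "f 2 \<le> M" "1 \<le> M \<longrightarrow> 1 \<in> {0, f 2}"
    by auto
  with \<open>f 2 \<noteq> 0\<close> have M: "M = 1" "f 2 = 1"
    by auto
  then obtain y where "d 1 * (\<Sum>j\<in>{j. j < 3 \<and> f j = 1}. ?A 1 j)
      = (\<Sum>j\<in>{j. j < 3 \<and> f j < 1}. y j * ?A 1 j)"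
    using later by auto
  then have "d 1 * of_int q = 0"
    using f01 M by (simp add: sum_lessThan_3_filter example_matrix_def)
  then have "(\<lambda>r. d 0 * (\<Prod>t\<in>{1..M}. d t) ^ 2 * r) = (\<lambda>r. 0)"
    using square_zero M by (simp add: power2_eq_square)
  then show False
    using infinite M by (metis finite.emptyI finite_insert image_constant_conv zero_less_one)
qed

definition ranked :: "(nat \<Rightarrow> 'a) \<Rightarrow> nat set \<Rightarrow> nat \<Rightarrow> 'a::zero" where
  "ranked w P k = (if k \<in> P then w (card {j \<in> P. j < k}) else 0)"

lemma ranked_image_strict_mono:
  assumes "strict_mono h"
  shows "ranked w (h ` P) (h k) = ranked w P k"
proof -
  have "{j \<in> h ` P. j < h k} = h ` {j \<in> P. j < k}"
    using strict_mono_less[OF assms] by auto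
  moreover have "inj h"
    using assms by (rule strict_mono_imp_inj_on)
  ultimately show ?thesis
    by (simp add: ranked_def inj_image_mem_iff card_image[OF inj_on_subset])
qed

lemma ranked_relation:
  fixes w :: "nat \<Rightarrow> 'a::comm_ring_1"
  assumes m: "m \<ge> 1" and w_Suc: "\<And>j. w (Suc j) = g * w j" and w_add: "\<And>j. w (j + m) = - w j"
  shows "ranked w ({..m} \<union> {2*m<..<3*m}) k - ranked w (insert 0 {m<..<3*m}) k
    = g * ranked w {1..2*m} k"
proof -
  have below: "{j \<in> {1..2*m}. j < k} = {1..<k}" if "k \<le> 2*m"
    using that by auto
  have middle: "card {j \<in> insert 0 {m<..<3*m}. j < k} = k - m" if "m < k" "k < 3*m"
  proof -
    have "{j \<in> insert 0 {m<..<3*m}. j < k} = insert 0 {m<..<k}"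
      using that by auto
    then show ?thesis
      using that m by (simp add: Suc_diff_Suc)
  qed
  consider "k = 0" | "1 \<le> k" "k \<le> m" | "m < k" "k \<le> 2*m" | "2*m < k" "k < 3*m" | "3*m \<le> k"
    by linarith
  then show ?thesis
  proof cases
    case 2
    then have "{j \<in> {..m} \<union> {2*m<..<3*m}. j < k} = {..<k}"
      by auto
    moreover have "w k = g * w (k - 1)"
      using 2 w_Suc[of "k - 1"] by simp
    ultimately show ?thesis
      using 2 below by (simp add: ranked_def)
  next
    case 3
    have "g * w (k - 1) = w (k - m + m)"
      using 3 w_Suc[of "k - 1"] by simp
    then have "g * w (k - 1) = - w (k - m)"
      by (simp only: w_add)
    then show ?thesis
      using 3 m below middle by (simp add: ranked_def)
  next
    case 4
    then have "{j \<in> {..m} \<union> {2*m<..<3*m}. j < k} = {..m} \<union> {2*m<..<k}"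
      by auto
    moreover have "card ({..m} \<union> {2*m<..<k}) = k - m"
      using 4 m by (subst card_Un_disjoint) auto
    ultimately show ?thesis
      using 4 middle by (simp add: ranked_def)
  qed (auto simp: ranked_def)
qed

definition spread :: "(nat \<Rightarrow> 'i) \<Rightarrow> (nat \<Rightarrow> 'a) \<Rightarrow> nat set \<Rightarrow> 'i \<Rightarrow> 'a::zero" where
  "spread e w P a = (if a \<in> range e then ranked w P (inv_into UNIV e a) else 0)"

lemma spread_apply:
  assumes "inj e"
  shows "spread e w P (e k) = ranked w P k"
  using assms by (simp add: spread_def)

lemma spread_image_strict_mono:
  assumes e: "inj e" and h: "strict_mono h"
  shows "spread e w (h ` P) = spread (e \<circ> h) w P"
proof
  fix a
  have inj: "inj (e \<circ> h)"
    using e h by (simp add: inj_compose strict_mono_imp_inj_on)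
  consider j where "a = e (h j)" | k where "a = e k" "k \<notin> range h" | "a \<notin> range e"
    by blast
  then show "spread e w (h ` P) a = spread (e \<circ> h) w P a"
  proof cases
    case 1
    then have "spread e w (h ` P) a = ranked w P j"
      using spread_apply[OF e, of w "h ` P" "h j"] ranked_image_strict_mono[OF h] by simp
    also have "\<dots> = spread (e \<circ> h) w P a"
      using 1 spread_apply[OF inj, of w P j] by simp
    finally show ?thesis .
  next
    case 2
    then have "a \<notin> range (e \<circ> h)"
      using e by (auto dest: injD)
    with 2 show ?thesis
      using e by (auto simp: spread_def ranked_def)
  next
    case 3
    then show ?thesis
      by (auto simp: spread_def)
  qed
qed

lemma spread_relation:
  fixes w :: "nat \<Rightarrow> 'a::comm_ring_1"
  assumes "m \<ge> 1" "\<And>j. w (Suc j) = g * w j" "\<And>j. w (j + m) = - w j"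
  shows "spread e w ({..m} \<union> {2*m<..<3*m}) - spread e w (insert 0 {m<..<3*m})
    = (\<lambda>a. g * spread e w {1..2*m} a)"
  using ranked_relation[OF assms] by (auto simp: spread_def)

lemma Ramsey_strict_mono:
  fixes C :: "nat set \<Rightarrow> nat"
  assumes "\<And>X. C X < s"
  obtains h :: "nat \<Rightarrow> nat" and c where "strict_mono h"
    "\<And>P. finite P \<Longrightarrow> card P = L \<Longrightarrow> C (h ` P) = c"
proof -
  have "C ` nsets UNIV L \<subseteq> {..<s}"
    using assms by auto
  then obtain Y c where Y: "infinite Y" "C ` nsets Y L \<subseteq> {c}"
    using Ramsey_nsets[OF infinite_UNIV_nat] by metis
  obtain h :: "nat \<Rightarrow> nat" where h: "strict_mono h" "\<And>k. h k \<in> Y"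
    using infinite_enumerate[OF Y(1)] by blast
  have "h ` P \<in> nsets Y L" if "finite P" "card P = L" for P
    using h that by (auto simp: nsets_def card_image strict_mono_imp_inj_on inj_on_subset)
  with Y(2) have "C (h ` P) = c" if "finite P" "card P = L" for P
    using that by blast
  with h(1) show thesis
    by (rule that)
qed

lemma power_add_mult_eq_minus:
  fixes g u :: "'a::comm_ring_1"
  assumes "(g ^ m + 1) * u = 0"
  shows "g ^ (j + m) * u = - (g ^ j * u)"
proof -
  have "g ^ (j + m) * u + g ^ j * u = g ^ j * ((g ^ m + 1) * u)"
    by (simp add: power_add algebra_simps)
  with assms show ?thesis
    by (simp add: add_eq_0_iff2)
qed

lemma partition_regular_example_matrix:
  fixes g q :: int and u :: "'m::comm_ring_1"
  assumes infinite: "infinite (UNIV :: 'i set)" and m: "m \<ge> 1" and "u \<noteq> 0"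
    and q: "of_int q * u = 0" and g: "(of_int g ^ m + 1) * u = 0"
  shows "partition_regular 2 3 (example_matrix (- g) q :: nat \<Rightarrow> nat \<Rightarrow> ('i \<Rightarrow> 'm))"
  unfolding partition_regular_def
proof (intro allI impI)
  fix r :: nat and \<chi> :: "('i \<Rightarrow> 'm) \<Rightarrow> nat"
  assume \<chi>: "\<forall>a. \<chi> a \<in> {1..r}"
  define w :: "nat \<Rightarrow> 'm" where "w j = of_int g ^ j * u" for j
  have w_Suc: "w (Suc j) = of_int g * w j" for j
    by (simp add: w_def)
  have w_add: "w (j + m) = - w j" for j
    using power_add_mult_eq_minus[OF g] by (simp add: w_def)
  define Px Py Pz where "Px = {..m} \<union> {2*m<..<3*m}" and "Py = insert 0 {m<..<3*m}"
    and "Pz = {1..2*m}"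
  have "card Px = 2*m"
    unfolding Px_def using m by (subst card_Un_disjoint) auto
  then have sizes: "finite P \<and> card P = 2*m" if "P \<in> {Px, Py, Pz}" for P
    using that m by (auto simp: Px_def Py_def Pz_def Suc_diff_Suc)
  obtain e :: "nat \<Rightarrow> 'i" where e: "inj e"
    using infinite_countable_subset[OF infinite] by blast
  obtain h :: "nat \<Rightarrow> nat" and c
    where h: "strict_mono h" and c: "\<And>P. finite P \<Longrightarrow> card P = 2*m \<Longrightarrow> \<chi> (spread e w (h ` P)) = c"
    using Ramsey_strict_mono[of "\<lambda>X. \<chi> (spread e w X)" "Suc r"] \<chi> by (auto simp: less_Suc_eq_le)
  define E where "E = e \<circ> h"
  have E: "inj E"
    using e h by (simp add: E_def inj_compose strict_mono_imp_inj_on)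
  define x where "x j = spread E w ([Px, Py, Pz] ! j)" for j
  show "\<exists>x. (\<exists>j<3. x j \<noteq> 0) \<and> (\<forall>i<2. (\<Sum>j<3. example_matrix (- g) q i j * x j) = 0)
      \<and> (\<exists>c. \<forall>j<3. \<chi> (x j) = c)"
  proof (rule exI[of _ x], intro conjI)
    have "x 0 (E 0) = u"
      using spread_apply[OF E, of w] by (simp add: x_def Px_def ranked_def w_def)
    then show "\<exists>j<3. x j \<noteq> 0"
      using \<open>u \<noteq> 0\<close> by (metis zero_fun_apply zero_less_numeral)
    have "\<chi> (x j) = c" if "j < 3" for j
    proof -
      have "[Px, Py, Pz] ! j \<in> {Px, Py, Pz}"
        using nth_mem[of j "[Px, Py, Pz]"] that by simp
      then have "\<chi> (spread e w (h ` ([Px, Py, Pz] ! j))) = c"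
        using c sizes by blast
      then show ?thesis
        using spread_image_strict_mono[OF e h, of w "[Px, Py, Pz] ! j"] by (simp add: x_def E_def)
    qed
    then show "\<exists>c. \<forall>j<3. \<chi> (x j) = c"
      by blast
    have row0: "x 0 - x 1 = of_int g * x 2"
      using spread_relation[OF m w_Suc w_add, of E] by (simp add: x_def Px_def Py_def Pz_def fun_eq_iff)
    have "of_int q * w j = 0" for j
      using q by (metis w_def mult.left_commute mult_zero_right)
    then have row1: "of_int q * x 2 = 0"
      by (simp add: x_def spread_def ranked_def fun_eq_iff)
    show "\<forall>i<2. (\<Sum>j<3. example_matrix (- g) q i j * x j) = 0"
      using row0 row1 by (auto simp: sum_lessThan_3 example_matrix_def less_2_cases_iff)
  qed
qed

lemma of_int_eq_0_iff_mod:
  assumes "\<forall>x y::int. ((of_int x :: 'm::comm_ring_1) = of_int y) \<longleftrightarrow> [x = y] (mod N)"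
  shows "(of_int x :: 'm) = 0 \<longleftrightarrow> N dvd x"
  using assms by (metis cong_0_iff of_int_0)

lemma annihilator_of_p_square_zero:
  fixes p :: nat and d :: "'i \<Rightarrow> 'm::comm_ring_1"
  assumes surj: "surj (of_int :: int \<Rightarrow> 'm)"
    and char: "\<forall>x y::int. ((of_int x :: 'm) = of_int y) \<longleftrightarrow> [x = y] (mod int (n * p ^ 2))"
    and "p > 0" and "d * of_int p = 0"
  shows "d * d = 0"
proof
  fix a
  obtain k where k: "d a = of_int k"
    using surj by (metis surj_def)
  then have "(of_int (k * int p) :: 'm) = 0"
    using fun_cong[OF assms(4), of a] by simp
  then have "int (n * p ^ 2) dvd k * int p"
    using of_int_eq_0_iff_mod[OF char] by blast
  then have "int n * int p dvd k"
    using \<open>p > 0\<close> by (simp add: power2_eq_square mult.assoc)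
  then have "int (n * p ^ 2) dvd k * k"
    by (metis dvd_mult_left mult_dvd_mono of_nat_mult power2_eq_square mult.assoc mult.commute)
  then show "(d * d) a = 0 a"
    using k of_int_eq_0_iff_mod[OF char, of "k * k"] by simp
qed

lemma of_int_n_mult_p_nonzero_annihilated:
  fixes n p :: nat and g :: int
  assumes "n > 0" and "prime p" and "int p dvd g ^ m + 1"
    and char: "\<forall>x y::int. ((of_int x :: 'm::comm_ring_1) = of_int y) \<longleftrightarrow> [x = y] (mod int (n * p ^ 2))"
  defines "u \<equiv> (of_int (int n * int p) :: 'm)"
  shows "u \<noteq> 0" "of_int p * u = 0" "(of_int g ^ m + 1) * u = 0"
proof -
  note zero_iff = of_int_eq_0_iff_mod[OF char]
  have "\<not> int n * int p * int p dvd int n * int p * 1"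
    using assms(1) prime_gt_1_nat[OF assms(2)] by simp
  then show "u \<noteq> 0"
    unfolding u_def zero_iff by (simp add: power2_eq_square mult.assoc)
  show "of_int p * u = 0"
    unfolding u_def using zero_iff[of "int p * (int n * int p)"]
    by (simp add: power2_eq_square algebra_simps)
  obtain t where t: "g ^ m + 1 = int p * t"
    using assms(3) by blast
  have "(of_int g ^ m + 1) * u = of_int ((g ^ m + 1) * (int n * int p))"
    by (simp add: u_def)
  also have "\<dots> = of_int (int (n * p ^ 2) * t)"
    using t by (simp add: power2_eq_square algebra_simps)
  also have "\<dots> = 0"
    using zero_iff[of "int (n * p ^ 2) * t"] by simp
  finally show "(of_int g ^ m + 1) * u = 0" .
qed

theorem corollary4p8:
  fixes n p :: nat
  assumes "n > 0" and "prime p" and "p \<ge> 5"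
    and "infinite (UNIV :: 'i set)"
    and "surj (of_int :: int \<Rightarrow> 'm::comm_ring_1)"
    and "\<forall>x y::int. ((of_int x :: 'm) = of_int y) \<longleftrightarrow> [x = y] (mod int (n * p ^ 2))"
  shows "\<exists>A :: nat \<Rightarrow> nat \<Rightarrow> ('i \<Rightarrow> 'm).
           partition_regular 2 3 A \<and> \<not> gen_columns_condition 2 3 A"
proof -
  obtain g :: int and m :: nat where m: "m \<ge> 1" and root: "int p dvd g ^ m + 1"
    and prime_to_p: "coprime g (int p)" "coprime (g - 1) (int p)" "coprime (g + 1) (int p)"
    using prime_exists_root_of_minus_one[OF assms(2,3)] by blast
  have "partition_regular 2 3 (example_matrix (- g) (int p) :: nat \<Rightarrow> nat \<Rightarrow> ('i \<Rightarrow> 'm))"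
    using partition_regular_example_matrix[OF assms(4) m]
      of_int_n_mult_p_nonzero_annihilated[OF assms(1,2) root assms(6)] by blast
  moreover have "\<not> gen_columns_condition 2 3 (example_matrix (- g) (int p) :: nat \<Rightarrow> nat \<Rightarrow> ('i \<Rightarrow> 'm))"
    using not_gen_columns_condition_example_matrix[OF prime_to_p]
      annihilator_of_p_square_zero[OF assms(5,6) prime_gt_0_nat[OF assms(2)]] by blast
  ultimately show ?thesis
    by blast
qed

end
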